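(* Consider the inexact Bregman proximal point algorithm described in the context, with $\Phi$ Legendre, and define the ergodic iterates $\breve p^K=\big(\sum_{k=0}^K\sigma_kp^k\big)/\big(\sum_{k=0}^K\sigma_k\big)$. Let $z\in\operatorname{dom}T\cap\operatorname{dom}\Phi$. Then for every $w\in T(z)$ and every $K\ge0$, $$\langle w,\breve p^K-z\rangle\le\frac{D_\Phi(z,z^0)}{\sum_{k=0}^K\sigma_k}.$$
   Context: Let $\mathbb{E}$ be a finite-dimensional Euclidean space, $\Gamma_0(\mathbb{E})$ the proper lsc convex functions $\mathbb{E}\to\mathbb{R}\cup\{+\infty\}$. $\Phi\in\Gamma_0(\mathbb{E})$ is Legendre if it is essentially smooth ($\operatorname{int}\operatorname{dom}\Phi\ne\emptyset$, differentiable there, $\|\nabla\Phi(z^\nu)\|\to\infty$ whenever $\operatorname{int}\operatorname{dom}\Phi\ni z^\nu\to z\in\operatorname{bdry}\operatorname{dom}\Phi$) and essentially strictly convex (strictly convex on every convex subset of $\operatorname{dom}\partial\Phi$); then $\nabla\Phi:\operatorname{int}\operatorname{dom}\Phi\to\operatorname{int}\operatorname{dom}\Phi^*$ is a bijection with inverse $\nabla\Phi^*$. $D_\Phi(z_1,z_2)=\Phi(z_1)-\Phi(z_2)-\langle\nabla\Phi(z_2),z_1-z_2\rangle$ if $z_1\in\operatorname{dom}\Phi$, $z_2\in\operatorname{int}\operatorname{dom}\Phi$, and $+\infty$ otherwise. Let $T:\mathbb{E}\rightrightarrows\mathbb{E}$ be maximal monotone and assume $\operatorname{int}\operatorname{dom}\Phi\cap\operatorname{dom}T\ne\emptyset$.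 Inexact Bregman proximal point algorithm: given $z^0\in\operatorname{int}\operatorname{dom}\Phi$, step sizes $\sigma_k\ge\sigma>0$ and tolerances $\rho_k\in[0,1)$, it generates triples $(z^{k+1},p^k,w^k)$ with $p^k\in\operatorname{dom}\Phi$, $w^k\in T(p^k)$, $\nabla\Phi(z^k)-\sigma_kw^k\in\operatorname{int}\operatorname{dom}\Phi^*$, $z^{k+1}=\nabla\Phi^*(\nabla\Phi(z^k)-\sigma_kw^k)\in\operatorname{int}\operatorname{dom}\Phi$, and $D_\Phi(p^k,z^{k+1})\le\rho_kD_\Phi(p^k,z^k)$. *)

theory Defs
  imports "HOL-Analysis.Analysis"
begin

text \<open>Extended-valued functions on a finite-dimensional Euclidean space are modelled
  as functions into ereal; the value \<open>\<infinity>\<close> plays the role of \<open>+\<infinity>\<close>.\<close>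

definition edom :: "('a \<Rightarrow> ereal) \<Rightarrow> 'a set" where
  "edom f = {x. f x < \<infinity>}"

definition proper_fun :: "('a \<Rightarrow> ereal) \<Rightarrow> bool" where
  "proper_fun f \<longleftrightarrow> edom f \<noteq> {} \<and> (\<forall>x. f x > -\<infinity>)"

definition lsc_fun :: "('a::topological_space \<Rightarrow> ereal) \<Rightarrow> bool" where
  "lsc_fun f \<longleftrightarrow> (\<forall>c::ereal. closed {x. f x \<le> c})"

definition econvex :: "('a::real_vector \<Rightarrow> ereal) \<Rightarrow> bool" where
  "econvex f \<longleftrightarrow> (\<forall>x y t. 0 \<le> t \<and> t \<le> 1 \<longrightarrow>
      f ((1 - t) *\<^sub>R x + t *\<^sub>R y) \<le> ereal (1 - t) * f x + ereal t * f y)"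

definition Gamma0 :: "('a::real_normed_vector \<Rightarrow> ereal) \<Rightarrow> bool" where
  "Gamma0 f \<longleftrightarrow> proper_fun f \<and> lsc_fun f \<and> econvex f"

definition differentiable_at_with :: "('a::real_inner \<Rightarrow> ereal) \<Rightarrow> 'a \<Rightarrow> 'a \<Rightarrow> bool" where
  "differentiable_at_with f x g \<longleftrightarrow>
     ((\<lambda>y. real_of_ereal (f y)) has_derivative (\<lambda>h. g \<bullet> h)) (at x)"

text \<open>Gradient (meaningful at points of \<open>int dom f\<close> where f is differentiable).\<close>
definition egrad :: "('a::real_inner \<Rightarrow> ereal) \<Rightarrow> 'a \<Rightarrow> 'a" where
  "egrad f x = (SOME g. differentiable_at_with f x g)"

definition essentially_smooth :: "('a::euclidean_space \<Rightarrow> ereal) \<Rightarrow> bool" where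
  "essentially_smooth f \<longleftrightarrow>
     interior (edom f) \<noteq> {} \<and>
     (\<forall>x \<in> interior (edom f). \<exists>g. differentiable_at_with f x g) \<and>
     (\<forall>X z. (\<forall>n. X n \<in> interior (edom f)) \<longrightarrow> X \<longlonglongrightarrow> z \<longrightarrow> z \<in> frontier (edom f) \<longrightarrow>
        filterlim (\<lambda>n. norm (egrad f (X n))) at_top sequentially)"

definition subdiff :: "('a::real_inner \<Rightarrow> ereal) \<Rightarrow> 'a \<Rightarrow> 'a set" where
  "subdiff f x = {g. f x < \<infinity> \<and> (\<forall>y. f y \<ge> f x + ereal (g \<bullet> (y - x)))}"

definition strictly_econvex_on :: "'a set \<Rightarrow> ('a::real_vector \<Rightarrow> ereal) \<Rightarrow> bool" where
  "strictly_econvex_on C f \<longleftrightarrow> (\<forall>x\<in>C. \<forall>y\<in>C. \<forall>t. x \<noteq> y \<and> 0 < t \<and> t < 1 \<longrightarrow>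
      f ((1 - t) *\<^sub>R x + t *\<^sub>R y) < ereal (1 - t) * f x + ereal t * f y)"

definition essentially_strictly_convex :: "('a::real_inner \<Rightarrow> ereal) \<Rightarrow> bool" where
  "essentially_strictly_convex f \<longleftrightarrow>
     (\<forall>C. convex C \<and> C \<subseteq> {x. subdiff f x \<noteq> {}} \<longrightarrow> strictly_econvex_on C f)"

definition Legendre :: "('a::euclidean_space \<Rightarrow> ereal) \<Rightarrow> bool" where
  "Legendre f \<longleftrightarrow> Gamma0 f \<and> essentially_smooth f \<and> essentially_strictly_convex f"

definition fconj :: "('a::real_inner \<Rightarrow> ereal) \<Rightarrow> 'a \<Rightarrow> ereal" where
  "fconj f y = (SUP x. ereal (x \<bullet> y) - f x)"

definition bregman :: "('a::real_inner \<Rightarrow> ereal) \<Rightarrow> 'a \<Rightarrow> 'a \<Rightarrow> ereal" where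
  "bregman f z1 z2 =
     (if z1 \<in> edom f \<and> z2 \<in> interior (edom f)
      then ereal (real_of_ereal (f z1) - real_of_ereal (f z2) - egrad f z2 \<bullet> (z1 - z2))
      else \<infinity>)"

definition monotone_op :: "('a::real_inner \<Rightarrow> 'a set) \<Rightarrow> bool" where
  "monotone_op T \<longleftrightarrow> (\<forall>x y u v. u \<in> T x \<and> v \<in> T y \<longrightarrow> (u - v) \<bullet> (x - y) \<ge> 0)"

definition maximal_monotone :: "('a::real_inner \<Rightarrow> 'a set) \<Rightarrow> bool" where
  "maximal_monotone T \<longleftrightarrow> monotone_op T \<and>
     (\<forall>x u. (\<forall>y v. v \<in> T y \<longrightarrow> (u - v) \<bullet> (x - y) \<ge> 0) \<longrightarrow> u \<in> T x)"

definition op_dom :: "('a \<Rightarrow> 'b set) \<Rightarrow> 'a set" where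
  "op_dom T = {x. T x \<noteq> {}}"

definition inexact_BPPA ::
  "('a::euclidean_space \<Rightarrow> ereal) \<Rightarrow> ('a \<Rightarrow> 'a set) \<Rightarrow> (nat \<Rightarrow> real) \<Rightarrow> real \<Rightarrow> (nat \<Rightarrow> real)
     \<Rightarrow> (nat \<Rightarrow> 'a) \<Rightarrow> (nat \<Rightarrow> 'a) \<Rightarrow> (nat \<Rightarrow> 'a) \<Rightarrow> bool" where
  "inexact_BPPA \<Phi> T \<sigma>s \<sigma> \<rho> z p w \<longleftrightarrow>
     z 0 \<in> interior (edom \<Phi>) \<and> \<sigma> > 0 \<and>
     (\<forall>k. \<sigma>s k \<ge> \<sigma> \<and> 0 \<le> \<rho> k \<and> \<rho> k < 1 \<and>
          p k \<in> edom \<Phi> \<and> w k \<in> T (p k) \<and>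
          egrad \<Phi> (z k) - \<sigma>s k *\<^sub>R w k \<in> interior (edom (fconj \<Phi>)) \<and>
          z (Suc k) = egrad (fconj \<Phi>) (egrad \<Phi> (z k) - \<sigma>s k *\<^sub>R w k) \<and>
          z (Suc k) \<in> interior (edom \<Phi>) \<and>
          bregman \<Phi> (p k) (z (Suc k)) \<le> ereal (\<rho> k) * bregman \<Phi> (p k) (z k))"

definition ergodic :: "(nat \<Rightarrow> real) \<Rightarrow> (nat \<Rightarrow> 'a::real_vector) \<Rightarrow> nat \<Rightarrow> 'a" where
  "ergodic \<sigma>s p K = (1 / (\<Sum>k\<le>K. \<sigma>s k)) *\<^sub>R (\<Sum>k\<le>K. \<sigma>s k *\<^sub>R p k)"

end

(*
  Legendre duality turns the update into the mirror step
  grad Phi (z (k+1)) = grad Phi (z k) - sigma_k w_k.  This rests on the fact that at a point y of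
  int dom Phi* the gradient of Phi* is the unique x having y as a subgradient of Phi: finiteness of
  Phi* near y makes Phi - <., y'> coercive uniformly for y' near y, so such points exist; essential
  strict convexity makes them unique; lower semicontinuity makes them depend continuously on y',
  and that continuity is exactly the differentiability of Phi*(y') = <x', y'> - Phi(x').

  Given the mirror step, the four-point identity for Bregman distances reads
  sigma_k <w_k, p_k - x> = D(x, z_k) - D(x, z_(k+1)) - (D(p_k, z_k) - D(p_k, z_(k+1))).
  The bracket is nonnegative by the inexactness criterion (rho_k <= 1), and monotonicity of T
  lets u replace w_k on the left.  Summing telescopes to at most D(x, z_0); dividing by the sum
  of the step sizes gives the bound for the ergodic average.
*)

theory Submission
  imports Defs
begin

section \<open>Subgradients and conjugates of extended-real functions\<close>

lemma ereal_real_of_edom: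
  assumes "\<Phi> v > -\<infinity>" and "v \<in> edom \<Phi>"
  shows "\<Phi> v = ereal (real_of_ereal (\<Phi> v))"
  using assms by (cases "\<Phi> v") (auto simp: edom_def)

lemma subdiff_iff_real:
  assumes fin: "\<And>v. \<Phi> v > -\<infinity>"
  shows "y \<in> subdiff \<Phi> x \<longleftrightarrow> x \<in> edom \<Phi> \<and>
    (\<forall>v\<in>edom \<Phi>. real_of_ereal (\<Phi> x) + y \<bullet> (v - x) \<le> real_of_ereal (\<Phi> v))"
proof -
  have "\<Phi> x + ereal (y \<bullet> (v - x)) \<le> \<Phi> v \<longleftrightarrow>
      (v \<in> edom \<Phi> \<longrightarrow> real_of_ereal (\<Phi> x) + y \<bullet> (v - x) \<le> real_of_ereal (\<Phi> v))"
    if "x \<in> edom \<Phi>" for v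
  proof -
    have "\<Phi> x + ereal (y \<bullet> (v - x)) = ereal (real_of_ereal (\<Phi> x) + y \<bullet> (v - x))"
      by (subst ereal_real_of_edom[OF fin that]) simp
    then show ?thesis
      using fin[of v] by (cases "\<Phi> v") (auto simp: edom_def)
  qed
  then show ?thesis
    unfolding subdiff_def by (auto simp: edom_def)
qed

lemma econvex_real_le:
  assumes cvx: "econvex \<Phi>" and fin: "\<And>v. \<Phi> v > -\<infinity>"
    and x: "x \<in> edom \<Phi>" and y: "y \<in> edom \<Phi>" and t: "0 \<le> t" "t \<le> 1"
  shows "(1 - t) *\<^sub>R x + t *\<^sub>R y \<in> edom \<Phi>"
    and "real_of_ereal (\<Phi> ((1 - t) *\<^sub>R x + t *\<^sub>R y))
           \<le> (1 - t) * real_of_ereal (\<Phi> x) + t * real_of_ereal (\<Phi> y)"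
proof -
  let ?m = "(1 - t) *\<^sub>R x + t *\<^sub>R y"
  obtain a b where a: "\<Phi> x = ereal a" and b: "\<Phi> y = ereal b"
    using ereal_real_of_edom[OF fin x] ereal_real_of_edom[OF fin y] by blast
  have "\<Phi> ?m \<le> ereal (1 - t) * \<Phi> x + ereal t * \<Phi> y"
    using cvx t unfolding econvex_def by blast
  then have "\<Phi> ?m \<le> ereal ((1 - t) * a + t * b)"
    by (simp add: a b)
  then show "?m \<in> edom \<Phi>" and "real_of_ereal (\<Phi> ?m)
      \<le> (1 - t) * real_of_ereal (\<Phi> x) + t * real_of_ereal (\<Phi> y)"
    using fin[of ?m] by (cases "\<Phi> ?m"; simp add: edom_def a b)+
qed

lemma fenchel_young: "ereal (v \<bullet> y) - \<Phi> v \<le> fconj \<Phi> y"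
  unfolding fconj_def by (rule SUP_upper) simp

lemma fconj_le_imp_affine_minorant:
  assumes "fconj \<Phi> q \<le> ereal M"
  shows "ereal (v \<bullet> q - M) \<le> \<Phi> v"
proof -
  have "ereal (v \<bullet> q) - \<Phi> v \<le> ereal M"
    using order_trans[OF fenchel_young assms] .
  then show ?thesis
    by (cases "\<Phi> v") auto
qed

lemma fconj_eq_subdiff:
  assumes fin: "\<And>v. \<Phi> v > -\<infinity>" and s: "y \<in> subdiff \<Phi> x"
  shows "fconj \<Phi> y = ereal (x \<bullet> y - real_of_ereal (\<Phi> x))"
proof (rule antisym)
  have x: "x \<in> edom \<Phi>" and sub: "\<And>v. v \<in> edom \<Phi> \<Longrightarrow>
      real_of_ereal (\<Phi> x) + y \<bullet> (v - x) \<le> real_of_ereal (\<Phi> v)"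
    using s subdiff_iff_real[of \<Phi>, OF fin] by blast+
  show "fconj \<Phi> y \<le> ereal (x \<bullet> y - real_of_ereal (\<Phi> x))"
    unfolding fconj_def
  proof (rule SUP_least)
    fix v
    show "ereal (v \<bullet> y) - \<Phi> v \<le> ereal (x \<bullet> y - real_of_ereal (\<Phi> x))"
    proof (cases "v \<in> edom \<Phi>")
      case True
      have "v \<bullet> y - real_of_ereal (\<Phi> v) \<le> x \<bullet> y - real_of_ereal (\<Phi> x)"
        using sub[OF True] by (simp add: inner_diff_right inner_commute)
      then show ?thesis
        by (subst ereal_real_of_edom[OF fin True]) simp
    qed (simp add: edom_def)
  qed
  have "ereal (x \<bullet> y) - \<Phi> x = ereal (x \<bullet> y - real_of_ereal (\<Phi> x))"
    by (subst ereal_real_of_edom[OF fin x]) simp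
  then show "ereal (x \<bullet> y - real_of_ereal (\<Phi> x)) \<le> fconj \<Phi> y"
    using fenchel_young[of x y \<Phi>] by simp
qed

lemma lsc_fun_LIMSEQ_le:
  assumes lsc: "lsc_fun \<Phi>" and "v \<longlonglongrightarrow> l" and "a \<longlonglongrightarrow> b"
    and le: "\<And>n. \<Phi> (v n) \<le> ereal (a n)"
  shows "\<Phi> l \<le> ereal b"
proof (rule ereal_le_epsilon2)
  fix e :: real assume "0 < e"
  then have "eventually (\<lambda>n. a n < b + e) sequentially"
    using \<open>a \<longlonglongrightarrow> b\<close> by (simp add: order_tendstoD(2))
  then have ev: "eventually (\<lambda>n. v n \<in> {x. \<Phi> x \<le> ereal (b + e)}) sequentially"
  proof eventually_elim
    case (elim n)
    have "\<Phi> (v n) \<le> ereal (a n)" by (rule le)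
    also have "\<dots> \<le> ereal (b + e)" using elim by simp
    finally show ?case by simp
  qed
  have "closed {x. \<Phi> x \<le> ereal (b + e)}"
    using lsc unfolding lsc_fun_def by blast
  from Lim_in_closed_set[OF this ev _ \<open>v \<longlonglongrightarrow> l\<close>] have "\<Phi> l \<le> ereal (b + e)"
    by simp
  then show "\<Phi> l \<le> ereal b + ereal e" by simp
qed

lemma minimizing_sequence:
  fixes G :: "'a \<Rightarrow> real"
  assumes "S \<noteq> {}"
  obtains xs where "\<And>n. xs n \<in> S" and "\<And>n. G (xs n) < Inf (G ` S) + inverse (real (Suc n))"
proof -
  have "\<exists>x\<in>S. G x < Inf (G ` S) + inverse (real (Suc n))" for n
    using cInf_lessD[of "G ` S" "Inf (G ` S) + inverse (real (Suc n))"] assms by auto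
  then show ?thesis
    using that by metis
qed

lemma lsc_growth_has_minimizer:
  fixes \<Phi> :: "'a::euclidean_space \<Rightarrow> ereal"
  assumes lsc: "lsc_fun \<Phi>" and fin: "\<And>v. \<Phi> v > -\<infinity>" and "edom \<Phi> \<noteq> {}"
    and growth: "\<And>v. ereal (v \<bullet> y + c * norm v - M) \<le> \<Phi> v" and "c > 0"
  obtains l where "l \<in> edom \<Phi>"
    and "\<And>v. v \<in> edom \<Phi> \<Longrightarrow> real_of_ereal (\<Phi> l) - l \<bullet> y \<le> real_of_ereal (\<Phi> v) - v \<bullet> y"
proof -
  define G where "G v = real_of_ereal (\<Phi> v) - v \<bullet> y" for v
  define m where "m = Inf (G ` edom \<Phi>)"
  have G_ge: "c * norm v - M \<le> G v" if "v \<in> edom \<Phi>" for v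
    using growth[of v] that fin[of v] by (cases "\<Phi> v") (auto simp: G_def edom_def)
  then have "-M \<le> G v" if "v \<in> edom \<Phi>" for v
    using that \<open>c > 0\<close> by (smt (verit) mult_nonneg_nonneg norm_ge_zero)
  then have "bdd_below (G ` edom \<Phi>)"
    by (intro bdd_belowI[of _ "-M"]) auto
  then have m_le: "m \<le> G v" if "v \<in> edom \<Phi>" for v
    unfolding m_def using that by (simp add: cInf_lower)
  obtain vs where vs: "\<And>n. vs n \<in> edom \<Phi>" "\<And>n. G (vs n) < m + inverse (real (Suc n))"
    using minimizing_sequence[OF \<open>edom \<Phi> \<noteq> {}\<close>] unfolding m_def by blast
  have "norm (vs n) \<le> (m + 1 + M) / c" for n
  proof -
    have "inverse (real (Suc n)) \<le> 1" by (simp add: inverse_le_1_iff)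
    then have "c * norm (vs n) \<le> m + 1 + M"
      using G_ge[OF vs(1)[of n]] vs(2)[of n] by linarith
    with \<open>c > 0\<close> show ?thesis by (simp add: field_simps)
  qed
  then have "bounded (range vs)" by (auto simp: bounded_iff)
  then obtain l r where "strict_mono r" and lim: "(vs \<circ> r) \<longlonglongrightarrow> l"
    using bounded_imp_convergent_subsequence by blast
  have "(\<lambda>n. inverse (real (Suc (r n)))) \<longlonglongrightarrow> 0"
    using LIMSEQ_subseq_LIMSEQ[OF LIMSEQ_inverse_real_of_nat \<open>strict_mono r\<close>] by (simp add: o_def)
  moreover have "(\<lambda>n. vs (r n)) \<longlonglongrightarrow> l"
    using lim by (simp add: o_def)
  ultimately have "(\<lambda>n. vs (r n) \<bullet> y + m + inverse (real (Suc (r n)))) \<longlonglongrightarrow> l \<bullet> y + m + 0"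
    by (intro tendsto_add tendsto_inner tendsto_const)
  moreover have "\<Phi> ((vs \<circ> r) n) \<le> ereal (vs (r n) \<bullet> y + m + inverse (real (Suc (r n))))" for n
    using vs(1)[of "r n"] vs(2)[of "r n"] fin[of "vs (r n)"]
    by (cases "\<Phi> (vs (r n))") (auto simp: G_def edom_def)
  ultimately have "\<Phi> l \<le> ereal (l \<bullet> y + m)"
    using lsc_fun_LIMSEQ_le[OF lsc lim] by simp
  then have "l \<in> edom \<Phi>" and "G l \<le> m"
    using fin[of l] by (cases "\<Phi> l"; auto simp: G_def edom_def)+
  with m_le show ?thesis
    using that unfolding G_def by force
qed

lemma subdiff_nonempty_of_growth:
  fixes \<Phi> :: "'a::euclidean_space \<Rightarrow> ereal"
  assumes lsc: "lsc_fun \<Phi>" and fin: "\<And>v. \<Phi> v > -\<infinity>" and "edom \<Phi> \<noteq> {}"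
    and growth: "\<And>v. ereal (v \<bullet> y + c * norm v - M) \<le> \<Phi> v" and "c > 0"
  obtains x where "y \<in> subdiff \<Phi> x"
proof -
  obtain l where l: "l \<in> edom \<Phi>"
    and min: "\<And>v. v \<in> edom \<Phi> \<Longrightarrow> real_of_ereal (\<Phi> l) - l \<bullet> y \<le> real_of_ereal (\<Phi> v) - v \<bullet> y"
    using lsc_growth_has_minimizer[OF assms] by blast
  have "y \<in> subdiff \<Phi> l"
    unfolding subdiff_iff_real[of \<Phi>, OF fin]
  proof (intro conjI ballI l)
    fix v assume "v \<in> edom \<Phi>"
    with min show "real_of_ereal (\<Phi> l) + y \<bullet> (v - l) \<le> real_of_ereal (\<Phi> v)"
      by (force simp: inner_diff_right inner_commute)
  qed
  then show ?thesis
    by (rule that)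
qed

lemma subdiff_graph_closed:
  fixes \<Phi> :: "'a::euclidean_space \<Rightarrow> ereal"
  assumes lsc: "lsc_fun \<Phi>" and fin: "\<And>v. \<Phi> v > -\<infinity>" and "x0 \<in> edom \<Phi>"
    and sub: "\<And>n. ys n \<in> subdiff \<Phi> (xs n)" and xs: "xs \<longlonglongrightarrow> x" and ys: "ys \<longlonglongrightarrow> y"
  shows "y \<in> subdiff \<Phi> x"
proof -
  have le: "\<Phi> x \<le> ereal (real_of_ereal (\<Phi> v) - y \<bullet> (v - x))" if v: "v \<in> edom \<Phi>" for v
  proof (rule lsc_fun_LIMSEQ_le[OF lsc xs])
    show "(\<lambda>n. real_of_ereal (\<Phi> v) - ys n \<bullet> (v - xs n)) \<longlonglongrightarrow> real_of_ereal (\<Phi> v) - y \<bullet> (v - x)"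
      by (intro tendsto_intros xs ys)
    fix n
    have "xs n \<in> edom \<Phi>" and "real_of_ereal (\<Phi> (xs n)) + ys n \<bullet> (v - xs n) \<le> real_of_ereal (\<Phi> v)"
      using sub[of n] v subdiff_iff_real[of \<Phi>, OF fin] by blast+
    then show "\<Phi> (xs n) \<le> ereal (real_of_ereal (\<Phi> v) - ys n \<bullet> (v - xs n))"
      using fin[of "xs n"] by (cases "\<Phi> (xs n)") (auto simp: edom_def)
  qed
  have x: "x \<in> edom \<Phi>"
    using le[OF \<open>x0 \<in> edom \<Phi>\<close>] by (cases "\<Phi> x") (auto simp: edom_def)
  show ?thesis
    unfolding subdiff_iff_real[of \<Phi>, OF fin]
  proof (intro conjI ballI x)
    fix v assume "v \<in> edom \<Phi>"
    then show "real_of_ereal (\<Phi> x) + y \<bullet> (v - x) \<le> real_of_ereal (\<Phi> v)"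
      using le[of v] fin[of x] x by (cases "\<Phi> x") (auto simp: edom_def)
  qed
qed

lemma subdiff_preimage_bounded:
  fixes \<Phi> :: "'a::euclidean_space \<Rightarrow> ereal"
  assumes fin: "\<And>v. \<Phi> v > -\<infinity>" and x0: "x0 \<in> edom \<Phi>" and "c > 0"
    and growth: "\<And>v y'. norm (y' - y) \<le> c \<Longrightarrow> ereal (v \<bullet> y' + c * norm v - M) \<le> \<Phi> v"
  obtains B where "\<And>x y'. norm (y' - y) \<le> c \<Longrightarrow> y' \<in> subdiff \<Phi> x \<Longrightarrow> norm x \<le> B"
proof
  fix x y' assume y': "norm (y' - y) \<le> c" and "y' \<in> subdiff \<Phi> x"
  then have x: "x \<in> edom \<Phi>"
    and sub: "real_of_ereal (\<Phi> x) + y' \<bullet> (x0 - x) \<le> real_of_ereal (\<Phi> x0)"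
    using x0 subdiff_iff_real[of \<Phi>, OF fin] by blast+
  have "x \<bullet> y' + c * norm x - M \<le> real_of_ereal (\<Phi> x)"
    using growth[OF y', of x] x fin[of x] by (cases "\<Phi> x") (auto simp: edom_def)
  moreover have "- (y' \<bullet> x0) \<le> (norm y + c) * norm x0"
  proof -
    have "norm y' \<le> norm y + c"
      using y' norm_triangle_ineq2[of y' y] by linarith
    then have "norm y' * norm x0 \<le> (norm y + c) * norm x0"
      by (simp add: mult_right_mono)
    then show ?thesis
      using norm_cauchy_schwarz[of "-y'" x0] by simp
  qed
  ultimately have "c * norm x \<le> real_of_ereal (\<Phi> x0) + (norm y + c) * norm x0 + M"
    using sub by (simp add: inner_diff_right inner_commute)
  with \<open>c > 0\<close> show "norm x \<le> (real_of_ereal (\<Phi> x0) + (norm y + c) * norm x0 + M) / c"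
    by (simp add: field_simps)
qed

lemma subdiff_common_on_segment:
  assumes cvx: "econvex \<Phi>" and fin: "\<And>v. \<Phi> v > -\<infinity>"
    and s1: "y \<in> subdiff \<Phi> x1" and s2: "y \<in> subdiff \<Phi> x2" and t: "0 \<le> t" "t \<le> 1"
  shows "y \<in> subdiff \<Phi> ((1 - t) *\<^sub>R x1 + t *\<^sub>R x2)"
    and "real_of_ereal (\<Phi> ((1 - t) *\<^sub>R x1 + t *\<^sub>R x2))
           = (1 - t) * real_of_ereal (\<Phi> x1) + t * real_of_ereal (\<Phi> x2)"
proof -
  define \<phi> where "\<phi> v = real_of_ereal (\<Phi> v)" for v
  define m where "m = (1 - t) *\<^sub>R x1 + t *\<^sub>R x2"
  have x1: "x1 \<in> edom \<Phi>" and sub1: "\<And>v. v \<in> edom \<Phi> \<Longrightarrow> \<phi> x1 + y \<bullet> (v - x1) \<le> \<phi> v"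
    using s1 subdiff_iff_real[of \<Phi>, OF fin] unfolding \<phi>_def by blast+
  have x2: "x2 \<in> edom \<Phi>" and sub2: "\<And>v. v \<in> edom \<Phi> \<Longrightarrow> \<phi> x2 + y \<bullet> (v - x2) \<le> \<phi> v"
    using s2 subdiff_iff_real[of \<Phi>, OF fin] unfolding \<phi>_def by blast+
  \<comment> \<open>the two subgradient inequalities force \<open>\<Phi>\<close> to be affine with slope \<open>y\<close> on the segment\<close>
  have "\<phi> x2 - \<phi> x1 = y \<bullet> (x2 - x1)"
    using sub1[OF x2] sub2[OF x1] by (simp add: inner_diff_right)
  moreover have "m - x1 = t *\<^sub>R (x2 - x1)"
    by (simp add: m_def scaleR_diff_left scaleR_diff_right)
  ultimately have slope: "y \<bullet> (m - x1) = t * (\<phi> x2 - \<phi> x1)"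
    by simp
  have m: "m \<in> edom \<Phi>" and "\<phi> m \<le> (1 - t) * \<phi> x1 + t * \<phi> x2"
    using econvex_real_le[OF cvx fin x1 x2 t] by (simp_all add: m_def \<phi>_def)
  then show \<phi>m: "real_of_ereal (\<Phi> ((1 - t) *\<^sub>R x1 + t *\<^sub>R x2))
      = (1 - t) * real_of_ereal (\<Phi> x1) + t * real_of_ereal (\<Phi> x2)"
    using sub1[OF m] slope unfolding m_def[symmetric] \<phi>_def[symmetric] by (simp add: algebra_simps)
  show "y \<in> subdiff \<Phi> ((1 - t) *\<^sub>R x1 + t *\<^sub>R x2)"
    unfolding subdiff_iff_real[of \<Phi>, OF fin] m_def[symmetric] \<phi>_def[symmetric]
  proof (intro conjI ballI m)
    fix v assume "v \<in> edom \<Phi>"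
    with sub1 \<phi>m slope show "\<phi> m + y \<bullet> (v - m) \<le> \<phi> v"
      unfolding m_def[symmetric] \<phi>_def[symmetric] by (force simp: inner_diff_right algebra_simps)
  qed
qed

lemma subdiff_inverse_unique:
  fixes \<Phi> :: "'a::euclidean_space \<Rightarrow> ereal"
  assumes cvx: "econvex \<Phi>" and esc: "essentially_strictly_convex \<Phi>"
    and fin: "\<And>v. \<Phi> v > -\<infinity>"
    and s1: "y \<in> subdiff \<Phi> x1" and s2: "y \<in> subdiff \<Phi> x2"
  shows "x1 = x2"
proof (rule ccontr)
  assume "x1 \<noteq> x2"
  note segment = subdiff_common_on_segment[OF cvx fin s1 s2]
  have "closed_segment x1 x2 \<subseteq> {x. subdiff \<Phi> x \<noteq> {}}"
    using segment(1) unfolding closed_segment_def by blast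
  then have "strictly_econvex_on (closed_segment x1 x2) \<Phi>"
    using esc unfolding essentially_strictly_convex_def by blast
  then have "\<forall>t. x1 \<noteq> x2 \<and> 0 < t \<and> t < 1 \<longrightarrow>
      \<Phi> ((1 - t) *\<^sub>R x1 + t *\<^sub>R x2) < ereal (1 - t) * \<Phi> x1 + ereal t * \<Phi> x2"
    using ends_in_segment[of x1 x2] unfolding strictly_econvex_on_def by blast
  from this[rule_format, of "1/2"] \<open>x1 \<noteq> x2\<close>
  have "\<Phi> ((1/2) *\<^sub>R x1 + (1/2) *\<^sub>R x2) < ereal (1/2) * \<Phi> x1 + ereal (1/2) * \<Phi> x2"
    by simp
  moreover have "x1 \<in> edom \<Phi>" "x2 \<in> edom \<Phi>" "(1/2) *\<^sub>R x1 + (1/2) *\<^sub>R x2 \<in> edom \<Phi>"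
    using s1 s2 segment(1)[of "1/2"] subdiff_iff_real[of \<Phi>, OF fin] by auto
  then obtain a1 a2 a where "\<Phi> x1 = ereal a1" "\<Phi> x2 = ereal a2"
    and "\<Phi> ((1/2) *\<^sub>R x1 + (1/2) *\<^sub>R x2) = ereal a"
    using ereal_real_of_edom[of \<Phi>, OF fin] by metis
  ultimately show False
    using segment(2)[of "1/2"] by simp
qed

section \<open>Gradient of the conjugate of a Legendre function\<close>

lemma norm_le_DIM_signed_Basis_inner:
  fixes v :: "'a::euclidean_space"
  obtains b s where "b \<in> Basis" "s \<in> {-1, 1}" "norm v \<le> real DIM('a) * (v \<bullet> (s *\<^sub>R b))"
proof -
  define m where "m = Max ((\<lambda>b. \<bar>v \<bullet> b\<bar>) ` Basis)"
  have "m \<in> (\<lambda>b. \<bar>v \<bullet> b\<bar>) ` Basis"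
    unfolding m_def by (rule Max_in) auto
  then obtain b where b: "b \<in> Basis" "\<bar>v \<bullet> b\<bar> = m"
    by auto
  have max: "\<bar>v \<bullet> b'\<bar> \<le> \<bar>v \<bullet> b\<bar>" if "b' \<in> Basis" for b'
    unfolding b(2) m_def using that by (intro Max_ge) auto
  have "norm v \<le> (\<Sum>b'\<in>Basis. \<bar>v \<bullet> b'\<bar>)"
    by (rule norm_le_l1)
  also have "\<dots> \<le> real DIM('a) * \<bar>v \<bullet> b\<bar>"
    using sum_bounded_above[of Basis "\<lambda>b'. \<bar>v \<bullet> b'\<bar>"] max by auto
  finally show ?thesis
    using that[OF b(1), of "-1"] that[OF b(1), of 1] by (cases "v \<bullet> b < 0") auto
qed

lemma fconj_interior_growth:
  fixes \<Phi> :: "'a::euclidean_space \<Rightarrow> ereal"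
  assumes "y \<in> interior (edom (fconj \<Phi>))"
  obtains c M where "c > 0"
    and "\<And>v y'. norm (y' - y) \<le> c \<Longrightarrow> ereal (v \<bullet> y' + c * norm v - M) \<le> \<Phi> v"
proof -
  obtain e where "e > 0" and ball: "ball y e \<subseteq> edom (fconj \<Phi>)"
    using assms mem_interior by blast
  define \<epsilon> where "\<epsilon> = e / 2"
  define P where "P = (\<lambda>(s, b). y + (s * \<epsilon>) *\<^sub>R b) ` ({-1, 1::real} \<times> Basis)"
  define M where "M = Max ((\<lambda>q. real_of_ereal (fconj \<Phi> q)) ` P)"
  define c where "c = \<epsilon> / (2 * real DIM('a))"
  have "\<epsilon> > 0" "c > 0"
    using \<open>e > 0\<close> by (auto simp: \<epsilon>_def c_def)
  \<comment> \<open>\<open>fconj \<Phi>\<close> is finite at the vertices \<open>y \<plusminus> \<epsilon> b\<close> of a cross-polytope; the vertex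
    best aligned with \<open>v\<close> gives the growth term\<close>
  have vertex: "ereal (v \<bullet> q - M) \<le> \<Phi> v" if "q \<in> P" for q v
  proof (rule fconj_le_imp_affine_minorant)
    have "q \<in> ball y e"
      using that \<open>e > 0\<close> by (auto simp: P_def \<epsilon>_def dist_norm)
    then have "fconj \<Phi> q < \<infinity>"
      using ball by (auto simp: edom_def)
    moreover have "real_of_ereal (fconj \<Phi> q) \<le> M"
      unfolding M_def P_def using that P_def by (intro Max_ge) auto
    ultimately show "fconj \<Phi> q \<le> ereal M"
      by (cases "fconj \<Phi> q") auto
  qed
  have "ereal (v \<bullet> y' + c * norm v - M) \<le> \<Phi> v" if "norm (y' - y) \<le> c" for v y'
  proof -
    obtain b s where bs: "b \<in> Basis" "s \<in> {-1, 1}"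
      and nv: "norm v \<le> real DIM('a) * (v \<bullet> (s *\<^sub>R b))"
      by (rule norm_le_DIM_signed_Basis_inner)
    let ?q = "y + (s * \<epsilon>) *\<^sub>R b"
    have "v \<bullet> (y' - y) \<le> norm v * norm (y' - y)"
      by (rule norm_cauchy_schwarz)
    also have "\<dots> \<le> c * norm v"
      using mult_left_mono[OF that norm_ge_zero[of v]] by (simp add: mult.commute)
    finally have "v \<bullet> (y' - y) \<le> c * norm v" .
    moreover have "2 * c * norm v \<le> \<epsilon> * (v \<bullet> (s *\<^sub>R b))"
      using nv \<open>\<epsilon> > 0\<close> by (simp add: c_def field_simps)
    ultimately have "v \<bullet> y' + c * norm v - M \<le> v \<bullet> ?q - M"
      by (simp add: inner_simps algebra_simps)
    also have "ereal \<dots> \<le> \<Phi> v"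
      using bs by (intro vertex) (auto simp: P_def)
    finally show ?thesis
      by simp
  qed
  with \<open>c > 0\<close> show ?thesis
    using that by blast
qed

lemma subdiff_inverse_LIMSEQ_subseq:
  fixes \<Phi> :: "'a::euclidean_space \<Rightarrow> ereal"
  assumes lsc: "lsc_fun \<Phi>" and fin: "\<And>v. \<Phi> v > -\<infinity>" and cvx: "econvex \<Phi>"
    and esc: "essentially_strictly_convex \<Phi>" and "c > 0"
    and growth: "\<And>v y'. norm (y' - y) \<le> c \<Longrightarrow> ereal (v \<bullet> y' + c * norm v - M) \<le> \<Phi> v"
    and sx: "y \<in> subdiff \<Phi> x"
    and ys: "ys \<longlonglongrightarrow> y" and near: "\<And>n. norm (ys n - y) \<le> c" and sub: "\<And>n. ys n \<in> subdiff \<Phi> (xs n)"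
  obtains r where "strict_mono r" and "(xs \<circ> r) \<longlonglongrightarrow> x"
proof -
  have x: "x \<in> edom \<Phi>"
    using sx subdiff_iff_real[of \<Phi>, OF fin] by blast
  obtain B where B: "\<And>x' y'. norm (y' - y) \<le> c \<Longrightarrow> y' \<in> subdiff \<Phi> x' \<Longrightarrow> norm x' \<le> B"
    using subdiff_preimage_bounded[OF fin x \<open>c > 0\<close> growth] by blast
  have "bounded (range xs)"
    using B[OF near sub] by (auto simp: bounded_iff)
  then obtain xl r where r: "strict_mono r" and lim: "(xs \<circ> r) \<longlonglongrightarrow> xl"
    using bounded_imp_convergent_subsequence by blast
  have "(ys \<circ> r) \<longlonglongrightarrow> y"
    using LIMSEQ_subseq_LIMSEQ[OF ys r] .
  from subdiff_graph_closed[OF lsc fin x _ lim this] have "y \<in> subdiff \<Phi> xl"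
    by (simp add: sub)
  then have "xl = x"
    using subdiff_inverse_unique[OF cvx esc fin _ sx] by blast
  with r lim show ?thesis
    using that by blast
qed

lemma subdiff_inverse_continuous:
  fixes \<Phi> :: "'a::euclidean_space \<Rightarrow> ereal"
  assumes lsc: "lsc_fun \<Phi>" and fin: "\<And>v. \<Phi> v > -\<infinity>" and cvx: "econvex \<Phi>"
    and esc: "essentially_strictly_convex \<Phi>" and "c > 0"
    and growth: "\<And>v y'. norm (y' - y) \<le> c \<Longrightarrow> ereal (v \<bullet> y' + c * norm v - M) \<le> \<Phi> v"
    and sx: "y \<in> subdiff \<Phi> x" and "e > 0"
  obtains d where "d > 0"
    and "\<And>x' y'. norm (y' - y) < d \<Longrightarrow> y' \<in> subdiff \<Phi> x' \<Longrightarrow> norm (x' - x) \<le> e"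
proof -
  have "\<exists>d>0. \<forall>x' y'. norm (y' - y) < d \<longrightarrow> y' \<in> subdiff \<Phi> x' \<longrightarrow> norm (x' - x) \<le> e"
  proof (rule ccontr)
    assume "\<not> ?thesis"
    then have neg: "\<forall>d>0. \<exists>x' y'. norm (y' - y) < d \<and> y' \<in> subdiff \<Phi> x' \<and> e < norm (x' - x)"
      by (auto simp: not_le)
    have "\<exists>x' y'. norm (y' - y) < min c (inverse (real (Suc n))) \<and> y' \<in> subdiff \<Phi> x' \<and>
        e < norm (x' - x)" for n
    proof -
      have "min c (inverse (real (Suc n))) > 0"
        using \<open>c > 0\<close> by simp
      with neg show ?thesis
        by blast
    qed
    then obtain xs ys where ys: "\<And>n. norm (ys n - y) < min c (inverse (real (Suc n)))"
      and sub: "\<And>n. ys n \<in> subdiff \<Phi> (xs n)" and far: "\<And>n. e < norm (xs n - x)"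
      by metis
    have "ys \<longlonglongrightarrow> y"
    proof (rule LIM_zero_cancel, rule LIMSEQ_norm_0)
      show "norm (ys n - y) < 1 / real (Suc n)" for n
        using ys[of n] by (simp add: inverse_eq_divide)
    qed
    moreover have "norm (ys n - y) \<le> c" for n
      using ys[of n] by simp
    ultimately obtain r where "(xs \<circ> r) \<longlonglongrightarrow> x"
      using subdiff_inverse_LIMSEQ_subseq[OF lsc fin cvx esc \<open>c > 0\<close> growth sx, where ys = ys and xs = xs] sub
      by blast
    then have "(\<lambda>n. norm ((xs \<circ> r) n - x)) \<longlonglongrightarrow> 0"
      by (intro tendsto_norm_zero LIM_zero)
    then have "e \<le> 0"
      using far by (intro LIMSEQ_le_const) (auto intro: less_imp_le)
    with \<open>e > 0\<close> show False
      by simp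
  qed
  then show ?thesis
    using that by blast
qed

lemma fconj_remainder_bounds:
  assumes fin: "\<And>v. \<Phi> v > -\<infinity>" and sx: "y \<in> subdiff \<Phi> x" and sx': "y' \<in> subdiff \<Phi> x'"
  shows "0 \<le> real_of_ereal (fconj \<Phi> y') - real_of_ereal (fconj \<Phi> y) - x \<bullet> (y' - y)"
    and "real_of_ereal (fconj \<Phi> y') - real_of_ereal (fconj \<Phi> y) - x \<bullet> (y' - y) \<le> (x' - x) \<bullet> (y' - y)"
proof -
  have x: "x \<in> edom \<Phi>"
    and subx: "\<And>v. v \<in> edom \<Phi> \<Longrightarrow> real_of_ereal (\<Phi> x) + y \<bullet> (v - x) \<le> real_of_ereal (\<Phi> v)"
    using sx subdiff_iff_real[of \<Phi>, OF fin] by blast+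
  have x': "x' \<in> edom \<Phi>"
    and subx': "real_of_ereal (\<Phi> x') + y' \<bullet> (x - x') \<le> real_of_ereal (\<Phi> x)"
    using sx' x subdiff_iff_real[of \<Phi>, OF fin] by blast+
  have "real_of_ereal (fconj \<Phi> y') - real_of_ereal (fconj \<Phi> y) - x \<bullet> (y' - y)
      = (x' \<bullet> y' - real_of_ereal (\<Phi> x')) - (x \<bullet> y - real_of_ereal (\<Phi> x)) - x \<bullet> (y' - y)"
    unfolding fconj_eq_subdiff[OF fin sx] fconj_eq_subdiff[OF fin sx'] by simp
  with subx' subx[OF x'] show
    "0 \<le> real_of_ereal (fconj \<Phi> y') - real_of_ereal (fconj \<Phi> y) - x \<bullet> (y' - y)"
    "real_of_ereal (fconj \<Phi> y') - real_of_ereal (fconj \<Phi> y) - x \<bullet> (y' - y) \<le> (x' - x) \<bullet> (y' - y)"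
    by (simp_all add: inner_simps inner_commute)
qed

lemma differentiable_at_with_fconj:
  fixes \<Phi> :: "'a::euclidean_space \<Rightarrow> ereal"
  assumes lsc: "lsc_fun \<Phi>" and fin: "\<And>v. \<Phi> v > -\<infinity>" and cvx: "econvex \<Phi>"
    and esc: "essentially_strictly_convex \<Phi>" and "c > 0"
    and growth: "\<And>v y'. norm (y' - y) \<le> c \<Longrightarrow> ereal (v \<bullet> y' + c * norm v - M) \<le> \<Phi> v"
    and sx: "y \<in> subdiff \<Phi> x"
  shows "differentiable_at_with (fconj \<Phi>) y x"
  unfolding differentiable_at_with_def has_derivative_at_alt
proof (intro conjI allI impI bounded_linear_inner_right)
  fix e :: real assume "e > 0"
  obtain d where "d > 0"
    and d: "\<And>x' y'. norm (y' - y) < d \<Longrightarrow> y' \<in> subdiff \<Phi> x' \<Longrightarrow> norm (x' - x) \<le> e"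
    using subdiff_inverse_continuous[OF lsc fin cvx esc \<open>c > 0\<close> growth sx \<open>e > 0\<close>] by blast
  have "edom \<Phi> \<noteq> {}"
    using sx subdiff_iff_real[of \<Phi>, OF fin] by blast
  have "norm (real_of_ereal (fconj \<Phi> y') - real_of_ereal (fconj \<Phi> y) - x \<bullet> (y' - y))
      \<le> e * norm (y' - y)" if y': "norm (y' - y) < min d c" for y'
  proof -
    have "norm (y' - y) \<le> c"
      using y' by simp
    then obtain x' where sx': "y' \<in> subdiff \<Phi> x'"
      using subdiff_nonempty_of_growth[OF lsc fin \<open>edom \<Phi> \<noteq> {}\<close> growth \<open>c > 0\<close>] by blast
    note R = fconj_remainder_bounds[OF fin sx sx']
    have "(x' - x) \<bullet> (y' - y) \<le> norm (x' - x) * norm (y' - y)"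
      by (rule norm_cauchy_schwarz)
    also have "\<dots> \<le> e * norm (y' - y)"
      using d[OF _ sx'] y' by (simp add: mult_right_mono)
    finally show ?thesis
      using R by simp
  qed
  moreover have "min d c > 0"
    using \<open>d > 0\<close> \<open>c > 0\<close> by simp
  ultimately show "\<exists>d>0. \<forall>y'. norm (y' - y) < d \<longrightarrow>
      norm (real_of_ereal (fconj \<Phi> y') - real_of_ereal (fconj \<Phi> y) - x \<bullet> (y' - y)) \<le> e * norm (y' - y)"
    by blast
qed

lemma egrad_eqI:
  assumes "differentiable_at_with f x g"
  shows "egrad f x = g"
proof -
  have "differentiable_at_with f x (egrad f x)"
    unfolding egrad_def using assms by (rule someI)
  then have "(\<lambda>h. egrad f x \<bullet> h) = (\<lambda>h. g \<bullet> h)"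
    using assms unfolding differentiable_at_with_def by (rule has_derivative_unique)
  from fun_cong[OF this, of "egrad f x - g"]
  have "(egrad f x - g) \<bullet> (egrad f x - g) = 0"
    by (simp add: inner_diff_left)
  then show ?thesis
    by simp
qed

lemma essentially_smooth_egrad:
  assumes "essentially_smooth \<Phi>" and "z \<in> interior (edom \<Phi>)"
  shows "differentiable_at_with \<Phi> z (egrad \<Phi> z)"
proof -
  obtain g where "differentiable_at_with \<Phi> z g"
    using assms unfolding essentially_smooth_def by blast
  then show ?thesis
    using egrad_eqI by metis
qed

lemma subgradient_eq_gradient_interior:
  assumes fin: "\<And>v. \<Phi> v > -\<infinity>" and z: "z \<in> interior (edom \<Phi>)"
    and dg: "differentiable_at_with \<Phi> z g" and s: "y \<in> subdiff \<Phi> z"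
  shows "y = g"
proof -
  let ?f = "\<lambda>v. real_of_ereal (\<Phi> v) - y \<bullet> v"
  have "(?f has_derivative (\<lambda>h. g \<bullet> h - y \<bullet> h)) (at z)"
    using dg unfolding differentiable_at_with_def by (intro derivative_intros)
  moreover have "eventually (\<lambda>v. v \<in> interior (edom \<Phi>)) (at z)"
    using z by (intro eventually_at_in_open') auto
  then have "eventually (\<lambda>v. ?f z \<le> ?f v) (at z)"
  proof eventually_elim
    case (elim v)
    then have "v \<in> edom \<Phi>"
      using interior_subset by blast
    then have "real_of_ereal (\<Phi> z) + y \<bullet> (v - z) \<le> real_of_ereal (\<Phi> v)"
      using s subdiff_iff_real[of \<Phi>, OF fin] by blast
    then show ?case
      by (simp add: inner_diff_right)
  qed
  ultimately have "(\<lambda>h. g \<bullet> h - y \<bullet> h) = (\<lambda>h. 0)"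
    by (rule has_derivative_local_min)
  from fun_cong[OF this, of "g - y"]
  have "(g - y) \<bullet> (g - y) = 0"
    by (simp add: inner_diff_left)
  then show ?thesis
    by simp
qed

lemma Legendre_egrad_egrad_fconj:
  fixes \<Phi> :: "'a::euclidean_space \<Rightarrow> ereal"
  assumes L: "Legendre \<Phi>" and y: "y \<in> interior (edom (fconj \<Phi>))"
    and int: "egrad (fconj \<Phi>) y \<in> interior (edom \<Phi>)"
  shows "egrad \<Phi> (egrad (fconj \<Phi>) y) = y"
proof -
  have "proper_fun \<Phi>" and lsc: "lsc_fun \<Phi>" and cvx: "econvex \<Phi>"
    and esc: "essentially_strictly_convex \<Phi>" and es: "essentially_smooth \<Phi>"
    using L unfolding Legendre_def Gamma0_def by auto
  then have fin: "\<And>v. \<Phi> v > -\<infinity>" and "edom \<Phi> \<noteq> {}"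
    unfolding proper_fun_def by auto
  obtain c M where "c > 0"
    and growth: "\<And>v y'. norm (y' - y) \<le> c \<Longrightarrow> ereal (v \<bullet> y' + c * norm v - M) \<le> \<Phi> v"
    using fconj_interior_growth[OF y] by blast
  have "\<And>v. ereal (v \<bullet> y + c * norm v - M) \<le> \<Phi> v"
    using growth[of y] \<open>c > 0\<close> by simp
  then obtain x where sx: "y \<in> subdiff \<Phi> x"
    using subdiff_nonempty_of_growth[OF lsc fin \<open>edom \<Phi> \<noteq> {}\<close> _ \<open>c > 0\<close>] by blast
  have x: "egrad (fconj \<Phi>) y = x"
    by (rule egrad_eqI[OF differentiable_at_with_fconj[OF lsc fin cvx esc \<open>c > 0\<close> growth sx]])
  show ?thesis
    unfolding x using subgradient_eq_gradient_interior[OF fin _ essentially_smooth_egrad[OF es] sx] int x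
    by simp
qed

section \<open>Bregman distances\<close>

lemma econvex_gradient_inequality:
  assumes cvx: "econvex \<Phi>" and fin: "\<And>v. \<Phi> v > -\<infinity>"
    and p: "p \<in> edom \<Phi>" and z: "z \<in> edom \<Phi>" and dg: "differentiable_at_with \<Phi> z g"
  shows "real_of_ereal (\<Phi> z) + g \<bullet> (p - z) \<le> real_of_ereal (\<Phi> p)"
proof -
  define h where "h = (\<lambda>t. real_of_ereal (\<Phi> (z + t *\<^sub>R (p - z))))"
  have "((\<lambda>v. real_of_ereal (\<Phi> v)) \<circ> (\<lambda>t. z + t *\<^sub>R (p - z)) has_derivative
      (\<lambda>h. g \<bullet> h) \<circ> (\<lambda>t. t *\<^sub>R (p - z))) (at 0)"
    using dg unfolding differentiable_at_with_def
    by (intro diff_chain_at) (auto intro!: derivative_eq_intros)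
  then have "(h has_derivative (\<lambda>t. t * (g \<bullet> (p - z)))) (at 0)"
    by (simp add: h_def o_def)
  then have "(h has_field_derivative g \<bullet> (p - z)) (at 0)"
    by (rule has_derivative_imp_has_field_derivative) simp
  then have "((\<lambda>t. (h t - h 0) / t) \<longlongrightarrow> g \<bullet> (p - z)) (at_right 0)"
    unfolding has_field_derivative_iff by (auto intro: tendsto_mono at_le)
  \<comment> \<open>by convexity the difference quotients on \<open>]0, 1[\<close> are bounded by the secant slope\<close>
  moreover have "eventually (\<lambda>t. (h t - h 0) / t \<le> real_of_ereal (\<Phi> p) - h 0) (at_right 0)"
    using eventually_at_right_real[OF zero_less_one]
  proof eventually_elim
    case (elim t)
    then have "h t \<le> (1 - t) * h 0 + t * real_of_ereal (\<Phi> p)"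
      using econvex_real_le(2)[OF cvx fin z p, of t]
      by (simp add: h_def algebra_simps)
    with elim show ?case
      by (simp add: field_simps)
  qed
  ultimately have "g \<bullet> (p - z) \<le> real_of_ereal (\<Phi> p) - h 0"
    by (rule tendsto_upperbound) simp
  then show ?thesis
    by (simp add: h_def)
qed

definition bregman_real :: "('a::real_inner \<Rightarrow> ereal) \<Rightarrow> 'a \<Rightarrow> 'a \<Rightarrow> real" where
  "bregman_real \<Phi> a b = real_of_ereal (\<Phi> a) - real_of_ereal (\<Phi> b) - egrad \<Phi> b \<bullet> (a - b)"

lemma bregman_eq_bregman_real:
  "a \<in> edom \<Phi> \<Longrightarrow> b \<in> interior (edom \<Phi>) \<Longrightarrow> bregman \<Phi> a b = ereal (bregman_real \<Phi> a b)"
  by (simp add: bregman_def bregman_real_def)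

lemma bregman_real_nonneg:
  assumes cvx: "econvex \<Phi>" and fin: "\<And>v. \<Phi> v > -\<infinity>" and es: "essentially_smooth \<Phi>"
    and a: "a \<in> edom \<Phi>" and b: "b \<in> interior (edom \<Phi>)"
  shows "0 \<le> bregman_real \<Phi> a b"
  using econvex_gradient_inequality[OF cvx fin a _ essentially_smooth_egrad[OF es b]]
    b interior_subset unfolding bregman_real_def by fastforce

lemma bregman_real_four_point:
  "bregman_real \<Phi> x a - bregman_real \<Phi> x b - (bregman_real \<Phi> p a - bregman_real \<Phi> p b)
     = (egrad \<Phi> b - egrad \<Phi> a) \<bullet> (x - p)"
  by (simp add: bregman_real_def inner_simps algebra_simps)

section \<open>The inexact Bregman proximal point algorithm\<close>

lemma inexact_BPPA_interior:
  assumes "inexact_BPPA \<Phi> T \<sigma>s \<sigma> \<rho> z p w"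
  shows "z k \<in> interior (edom \<Phi>)"
proof (cases k)
  case (Suc n)
  then show ?thesis
    using assms unfolding inexact_BPPA_def by blast
qed (use assms in \<open>simp add: inexact_BPPA_def\<close>)

lemma inexact_BPPA_stepD:
  assumes "inexact_BPPA \<Phi> T \<sigma>s \<sigma> \<rho> z p w"
  shows "0 < \<sigma>s k" and "0 \<le> \<rho> k" and "\<rho> k \<le> 1" and "p k \<in> edom \<Phi>" and "w k \<in> T (p k)"
    and "bregman \<Phi> (p k) (z (Suc k)) \<le> ereal (\<rho> k) * bregman \<Phi> (p k) (z k)"
proof -
  have "0 < \<sigma>" and H: "\<sigma> \<le> \<sigma>s k \<and> 0 \<le> \<rho> k \<and> \<rho> k < 1 \<and> p k \<in> edom \<Phi> \<and> w k \<in> T (p k) \<and>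
      bregman \<Phi> (p k) (z (Suc k)) \<le> ereal (\<rho> k) * bregman \<Phi> (p k) (z k)"
    using assms unfolding inexact_BPPA_def by blast+
  then show "0 < \<sigma>s k" "0 \<le> \<rho> k" "\<rho> k \<le> 1" "p k \<in> edom \<Phi>" "w k \<in> T (p k)"
    "bregman \<Phi> (p k) (z (Suc k)) \<le> ereal (\<rho> k) * bregman \<Phi> (p k) (z k)"
    by auto
qed

lemma inexact_BPPA_egrad_step:
  assumes "Legendre \<Phi>" and "inexact_BPPA \<Phi> T \<sigma>s \<sigma> \<rho> z p w"
  shows "egrad \<Phi> (z (Suc k)) = egrad \<Phi> (z k) - \<sigma>s k *\<^sub>R w k"
proof -
  have "egrad \<Phi> (z k) - \<sigma>s k *\<^sub>R w k \<in> interior (edom (fconj \<Phi>))"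
    and "z (Suc k) = egrad (fconj \<Phi>) (egrad \<Phi> (z k) - \<sigma>s k *\<^sub>R w k)"
    and "z (Suc k) \<in> interior (edom \<Phi>)"
    using assms(2) unfolding inexact_BPPA_def by blast+
  then show ?thesis
    using Legendre_egrad_egrad_fconj[OF assms(1)] by simp
qed

lemma inexact_BPPA_descent:
  assumes L: "Legendre \<Phi>" and mono: "monotone_op T" and alg: "inexact_BPPA \<Phi> T \<sigma>s \<sigma> \<rho> z p w"
    and x: "x \<in> edom \<Phi>" and u: "u \<in> T x"
  shows "\<sigma>s k * (u \<bullet> (p k - x)) \<le> bregman_real \<Phi> x (z k) - bregman_real \<Phi> x (z (Suc k))"
proof -
  have cvx: "econvex \<Phi>" and es: "essentially_smooth \<Phi>" and fin: "\<And>v. \<Phi> v > -\<infinity>"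
    using L unfolding Legendre_def Gamma0_def proper_fun_def by auto
  note step = inexact_BPPA_stepD[OF alg, of k]
  note pk = step(4)
  note z = inexact_BPPA_interior[OF alg]
  have "bregman_real \<Phi> (p k) (z (Suc k)) \<le> \<rho> k * bregman_real \<Phi> (p k) (z k)"
    using step(6) by (simp add: bregman_eq_bregman_real[OF pk z])
  also have "\<dots> \<le> bregman_real \<Phi> (p k) (z k)"
    by (rule mult_left_le_one_le[OF bregman_real_nonneg[OF cvx fin es pk z] step(2,3)])
  finally have "bregman_real \<Phi> (p k) (z (Suc k)) \<le> bregman_real \<Phi> (p k) (z k)" .
  moreover have "\<sigma>s k * (u \<bullet> (p k - x)) \<le> \<sigma>s k * (w k \<bullet> (p k - x))"
    using mono step(5) u step(1) unfolding monotone_op_def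
    by (metis inner_diff_left diff_ge_0_iff_ge mult_left_mono less_imp_le)
  moreover have "\<sigma>s k * (w k \<bullet> (p k - x)) = bregman_real \<Phi> x (z k) - bregman_real \<Phi> x (z (Suc k))
      - (bregman_real \<Phi> (p k) (z k) - bregman_real \<Phi> (p k) (z (Suc k)))"
    unfolding bregman_real_four_point inexact_BPPA_egrad_step[OF L alg]
    by (simp add: inner_simps right_diff_distrib)
  ultimately show ?thesis
    by linarith
qed

lemma inner_ergodic_diff:
  assumes "(\<Sum>k\<le>K. \<sigma>s k) \<noteq> 0"
  shows "(\<Sum>k\<le>K. \<sigma>s k) * (u \<bullet> (ergodic \<sigma>s p K - x)) = (\<Sum>k\<le>K. \<sigma>s k * (u \<bullet> (p k - x)))"
proof -
  have "(\<Sum>k\<le>K. \<sigma>s k) * (u \<bullet> ergodic \<sigma>s p K) = u \<bullet> (\<Sum>k\<le>K. \<sigma>s k *\<^sub>R p k)"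
    using assms by (simp add: ergodic_def)
  moreover have "(\<Sum>k\<le>K. \<sigma>s k * (u \<bullet> (p k - x)))
      = u \<bullet> (\<Sum>k\<le>K. \<sigma>s k *\<^sub>R p k) - (\<Sum>k\<le>K. \<sigma>s k) * (u \<bullet> x)"
    by (simp add: inner_sum_right inner_diff_right sum_subtractf sum_distrib_right right_diff_distrib)
  ultimately show ?thesis
    by (simp add: inner_diff_right right_diff_distrib)
qed

theorem mainTheorem10:
  fixes \<Phi> :: "'a::euclidean_space \<Rightarrow> ereal"
    and T :: "'a \<Rightarrow> 'a set"
    and \<sigma>s \<rho> :: "nat \<Rightarrow> real" and \<sigma> :: real
    and z p w :: "nat \<Rightarrow> 'a"
    and x u :: 'a and K :: nat
  assumes "Legendre \<Phi>"
    and "maximal_monotone T"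
    and "interior (edom \<Phi>) \<inter> op_dom T \<noteq> {}"
    and "inexact_BPPA \<Phi> T \<sigma>s \<sigma> \<rho> z p w"
    and "x \<in> op_dom T \<inter> edom \<Phi>"
    and "u \<in> T x"
  shows "ereal (u \<bullet> (ergodic \<sigma>s p K - x)) \<le> bregman \<Phi> x (z 0) / ereal (\<Sum>k\<le>K. \<sigma>s k)"
proof -
  have fin: "\<And>v. \<Phi> v > -\<infinity>" and cvx: "econvex \<Phi>" and es: "essentially_smooth \<Phi>"
    using assms(1) unfolding Legendre_def Gamma0_def proper_fun_def by auto
  have mono: "monotone_op T"
    using assms(2) unfolding maximal_monotone_def by simp
  have x: "x \<in> edom \<Phi>"
    using assms(5) by simp
  note z = inexact_BPPA_interior[OF assms(4)]
  \<comment> \<open>\<open>interior (edom \<Phi>) \<inter> op_dom T \<noteq> {}\<close> only makes the iteration well posed; the estimate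
    does not use it\<close>
  define S where "S = (\<Sum>k\<le>K. \<sigma>s k)"
  have "S > 0"
    unfolding S_def by (intro sum_pos) (auto intro: inexact_BPPA_stepD(1)[OF assms(4)])
  have "S * (u \<bullet> (ergodic \<sigma>s p K - x)) = (\<Sum>k\<le>K. \<sigma>s k * (u \<bullet> (p k - x)))"
    using \<open>S > 0\<close> unfolding S_def by (intro inner_ergodic_diff) simp
  also have "\<dots> \<le> (\<Sum>k\<le>K. bregman_real \<Phi> x (z k) - bregman_real \<Phi> x (z (Suc k)))"
    by (intro sum_mono inexact_BPPA_descent[OF assms(1) mono assms(4) x assms(6)])
  also have "\<dots> = bregman_real \<Phi> x (z 0) - bregman_real \<Phi> x (z (Suc K))"
    by (rule sum_telescope)
  also have "\<dots> \<le> bregman_real \<Phi> x (z 0)"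
    using bregman_real_nonneg[OF cvx fin es x z[of "Suc K"]] by simp
  finally have "u \<bullet> (ergodic \<sigma>s p K - x) \<le> bregman_real \<Phi> x (z 0) / S"
    using \<open>S > 0\<close> by (simp add: field_simps)
  then show ?thesis
    using \<open>S > 0\<close> by (simp add: bregman_eq_bregman_real[OF x z] S_def)
qed

end
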